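(* Let $f: E \to \Delta[n]$ be a surjective map of simplicial sets and let $\alpha$ be a vertex of the barycentric subdivision $\Delta'[n]$, i.e. a non-degenerate face $\alpha: \Delta[k] \hookrightarrow \Delta[n]$. Then the inclusion $Sdf^{-1}(\alpha) \hookrightarrow ESt(\alpha)$ is a homotopy equivalence.
   Context: The barycentric subdivision $\Delta'[n]$ is the simplicial set whose $q$-simplices are chains $\mu=(\mu_0,\dots,\mu_q)$ of non-degenerate faces $\mu_i:\Delta[k_i]\hookrightarrow\Delta[n]$ with $\mathrm{Im}\,\mu_i\subseteq\mathrm{Im}\,\mu_{i+1}$, with simplicial operator $\theta:[q']\to[q]$ acting by $\mu\mapsto(\mu_{\theta(0)},\dots,\mu_{\theta(q')})$; it is functorial in $n$. For a simplicial set $E$, the subdivision is $SdE=\mathrm{colim}_{\Delta E}\Delta'[p]$ over the simplex category of $E$; its $q$-simplices are classes $[x,\mu]$ with $x$ a $p$-simplex of $E$ and $\mu$ a $q$-simplex of $\Delta'[p]$. For $f:E\to\Delta[n]$, the map $Sdf: SdE\to\Delta'[n]$ sends $[x,\mu]$ to $(\nu_0,\dots,\nu_q)$, where $f\circ x\circ\mu_i:\Delta[k_i]\to\Delta[n]$ is factored uniquely as a surjection $\Delta[k_i]\to\Delta[l_i]$ followed by an injection $\nu_i:\Delta[l_i]\hookrightarrow\Delta[n]$. $Sdf^{-1}(\alpha)$ is the preimage under $Sdf$ of the vertex $\alpha$ (the simplices mapping to degeneracies of $\alpha$). The star $St(\alpha)\subseteq\Delta'[n]$ is the subspace of simplices $(\mu_0,\dots,\mu_p)$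 with $\mathrm{Im}\,\mu_i\supseteq\mathrm{Im}\,\alpha$ for all $i$, and $ESt(\alpha)=Sdf^{-1}(St(\alpha))$. *)

theory Defs
  imports Main
begin

text \<open>A simplicial operator theta : [q'] -> [q] (a monotone map) is represented by the list
  [theta 0, ..., theta q'] of its values.\<close>

definition ops :: "nat \<Rightarrow> nat \<Rightarrow> nat list set" where
  "ops q' q = {\<theta>. length \<theta> = Suc q' \<and> sorted \<theta> \<and> (\<forall>i\<in>set \<theta>. i \<le> q)}"

text \<open>Composition: ocomp theta phi is theta after phi.\<close>
definition ocomp :: "nat list \<Rightarrow> nat list \<Rightarrow> nat list" where
  "ocomp \<theta> \<phi> = map (nth \<theta>) \<phi>"

definition oid :: "nat \<Rightarrow> nat list" where
  "oid q = [0..<Suc q]"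

text \<open>cells X q is the set of q-simplices; act X q theta x is the action x.theta of an
  operator theta : [q'] -> [q] on a q-simplex x.\<close>
record 'a sset =
  cells :: "nat \<Rightarrow> 'a set"
  act :: "nat \<Rightarrow> nat list \<Rightarrow> 'a \<Rightarrow> 'a"

definition sset :: "'a sset \<Rightarrow> bool" where
  "sset X \<longleftrightarrow>
     (\<forall>q q' \<theta> x. x \<in> cells X q \<longrightarrow> \<theta> \<in> ops q' q \<longrightarrow> act X q \<theta> x \<in> cells X q') \<and>
     (\<forall>q x. x \<in> cells X q \<longrightarrow> act X q (oid q) x = x) \<and>
     (\<forall>q q' q'' \<theta> \<phi> x. x \<in> cells X q \<longrightarrow> \<theta> \<in> ops q' q \<longrightarrow> \<phi> \<in> ops q'' q' \<longrightarrow>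
         act X q' \<phi> (act X q \<theta> x) = act X q (ocomp \<theta> \<phi>) x)"

definition smap :: "'a sset \<Rightarrow> 'b sset \<Rightarrow> ('a \<Rightarrow> 'b) \<Rightarrow> bool" where
  "smap X Y f \<longleftrightarrow>
     (\<forall>q x. x \<in> cells X q \<longrightarrow> f x \<in> cells Y q) \<and>
     (\<forall>q q' \<theta> x. x \<in> cells X q \<longrightarrow> \<theta> \<in> ops q' q \<longrightarrow> f (act X q \<theta> x) = act Y q \<theta> (f x))"

definition subsset :: "'a sset \<Rightarrow> (nat \<Rightarrow> 'a \<Rightarrow> bool) \<Rightarrow> 'a sset" where
  "subsset X P = \<lparr>cells = (\<lambda>q. {x \<in> cells X q. P q x}), act = act X\<rparr>"

definition stdsimplex :: "nat \<Rightarrow> nat list sset" where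
  "stdsimplex n = \<lparr>cells = (\<lambda>q. ops q n), act = (\<lambda>q \<theta> x. ocomp x \<theta>)\<rparr>"

text \<open>Non-degenerate faces Delta[k] -> Delta[n]: injective operators, i.e. strictly
  increasing lists; the image is the set of entries.\<close>
definition face :: "nat \<Rightarrow> nat list \<Rightarrow> bool" where
  "face n \<mu> \<longleftrightarrow> \<mu> \<noteq> [] \<and> sorted_wrt (<) \<mu> \<and> (\<forall>i\<in>set \<mu>. i \<le> n)"

text \<open>q-simplices of Delta'[n]: chains (mu_0,...,mu_q) of non-degenerate faces with
  Im mu_i contained in Im mu_(i+1).\<close>
definition chains :: "nat \<Rightarrow> nat \<Rightarrow> nat list list set" where
  "chains n q = {\<mu>. length \<mu> = Suc q \<and> (\<forall>i<length \<mu>. face n (\<mu> ! i)) \<and>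
                     (\<forall>i. Suc i < length \<mu> \<longrightarrow> set (\<mu> ! i) \<subseteq> set (\<mu> ! Suc i))}"

definition bsd :: "nat \<Rightarrow> nat list list sset" where
  "bsd n = \<lparr>cells = chains n, act = (\<lambda>q \<theta> \<mu>. map (nth \<mu>) \<theta>)\<rparr>"

text \<open>Image face: the unique injective part of the epi-mono factorisation of an operator.\<close>
definition imface :: "nat list \<Rightarrow> nat list" where
  "imface \<theta> = sorted_list_of_set (set \<theta>)"

text \<open>Functoriality of Delta'[-]: theta : [p'] -> [p] induces Delta'[p'] -> Delta'[p].\<close>
definition bsd_push :: "nat list \<Rightarrow> nat list list \<Rightarrow> nat list list" where
  "bsd_push \<theta> \<mu> = map (\<lambda>m. imface (ocomp \<theta> m)) \<mu>"

section \<open>Subdivision Sd E = colim over the simplex category of E of Delta'[p]\<close>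

text \<open>Representatives of q-simplices: triples (p, x, mu) with x a p-simplex of E and
  mu a q-simplex of Delta'[p].\<close>
definition sd_gen :: "'a sset \<Rightarrow> nat \<Rightarrow> (nat \<times> 'a \<times> nat list list) \<Rightarrow> (nat \<times> 'a \<times> nat list list) \<Rightarrow> bool" where
  "sd_gen E q t t' \<longleftrightarrow> (\<exists>p p' x \<theta> \<mu>. x \<in> cells E p \<and> \<theta> \<in> ops p' p \<and> \<mu> \<in> chains p' q \<and>
        t = (p', act E p \<theta> x, \<mu>) \<and> t' = (p, x, bsd_push \<theta> \<mu>))"

definition sd_class :: "'a sset \<Rightarrow> nat \<Rightarrow> (nat \<times> 'a \<times> nat list list) \<Rightarrow> (nat \<times> 'a \<times> nat list list) set" where
  "sd_class E q t = {t'. equivclp (sd_gen E q) t t'}"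

definition Sd :: "'a sset \<Rightarrow> (nat \<times> 'a \<times> nat list list) set sset" where
  "Sd E = \<lparr>cells = (\<lambda>q. {sd_class E q (p, x, \<mu>) | p x \<mu>. x \<in> cells E p \<and> \<mu> \<in> chains p q}),
           act = (\<lambda>q \<theta> c. (case (SOME t. t \<in> c) of (p, x, \<mu>) \<Rightarrow>
                    sd_class E (length \<theta> - 1) (p, x, map (nth \<mu>) \<theta>)))\<rparr>"

definition Sdf :: "('a \<Rightarrow> nat list) \<Rightarrow> (nat \<times> 'a \<times> nat list list) set \<Rightarrow> nat list list" where
  "Sdf f c = (case (SOME t. t \<in> c) of (p, x, \<mu>) \<Rightarrow> map (\<lambda>m. imface (ocomp (f x) m)) \<mu>)"

text \<open>Preimage of the vertex alpha: simplices mapped to degeneracies of alpha.\<close>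
definition Sd_fiber :: "'a sset \<Rightarrow> ('a \<Rightarrow> nat list) \<Rightarrow> nat list \<Rightarrow> (nat \<times> 'a \<times> nat list list) set sset" where
  "Sd_fiber E f \<alpha> = subsset (Sd E) (\<lambda>q c. Sdf f c = replicate (Suc q) \<alpha>)"

definition star :: "nat \<Rightarrow> nat list \<Rightarrow> nat \<Rightarrow> nat list list set" where
  "star n \<alpha> q = {\<mu> \<in> chains n q. \<forall>i<length \<mu>. set \<alpha> \<subseteq> set (\<mu> ! i)}"

definition ESt :: "'a sset \<Rightarrow> ('a \<Rightarrow> nat list) \<Rightarrow> nat \<Rightarrow> nat list \<Rightarrow> (nat \<times> 'a \<times> nat list list) set sset" where
  "ESt E f n \<alpha> = subsset (Sd E) (\<lambda>q c. Sdf f c \<in> star n \<alpha> q)"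

definition sprod :: "'a sset \<Rightarrow> 'b sset \<Rightarrow> ('a \<times> 'b) sset" where
  "sprod X Y = \<lparr>cells = (\<lambda>q. cells X q \<times> cells Y q),
                act = (\<lambda>q \<theta> (x, y). (act X q \<theta> x, act Y q \<theta> y))\<rparr>"

definition elem_htpy :: "'a sset \<Rightarrow> 'b sset \<Rightarrow> ('a \<Rightarrow> 'b) \<Rightarrow> ('a \<Rightarrow> 'b) \<Rightarrow> bool" where
  "elem_htpy X Y f g \<longleftrightarrow> smap X Y f \<and> smap X Y g \<and>
     (\<exists>H. smap (sprod X (stdsimplex 1)) Y H \<and>
          (\<forall>q x. x \<in> cells X q \<longrightarrow> H (x, replicate (Suc q) 0) = f x \<and> H (x, replicate (Suc q) 1) = g x))"

definition homotopic :: "'a sset \<Rightarrow> 'b sset \<Rightarrow> ('a \<Rightarrow> 'b) \<Rightarrow> ('a \<Rightarrow> 'b) \<Rightarrow> bool" where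
  "homotopic X Y f g \<longleftrightarrow> smap X Y f \<and> smap X Y g \<and> equivclp (elem_htpy X Y) f g"

definition homotopy_equivalence :: "'a sset \<Rightarrow> 'b sset \<Rightarrow> ('a \<Rightarrow> 'b) \<Rightarrow> bool" where
  "homotopy_equivalence X Y i \<longleftrightarrow> smap X Y i \<and>
     (\<exists>g. smap Y X g \<and> homotopic X X (g \<circ> i) id \<and> homotopic Y Y (i \<circ> g) id)"

end

theory Submission
  imports Defs
begin

text \<open>Let c = [x, mu] be a simplex of ESt(alpha). Every face f x o mu_i then covers alpha, so
  mu_i may be shrunk to the face of the vertices that f x sends into alpha; the shrunk chain
  lies over alpha. For an operator psi : [q] -> [1], shrinking exactly the entries mu_i with
  psi i = 0 keeps the chain condition (psi is monotone and shrinking is monotone), commutes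
  with the relations defining Sd E and with simplicial operators, and so defines a simplicial
  homotopy ESt(alpha) x Delta[1] -> ESt(alpha) from a retraction onto Sdf^-1(alpha) to the
  identity. The retraction fixes Sdf^-1(alpha) pointwise, since there nothing is shrunk.\<close>

lemma imface_eq_face:
  assumes "sorted_wrt (<) \<beta>" "set \<theta> = set \<beta>"
  shows "imface \<theta> = \<beta>"
  using assms unfolding imface_def
  by (metis finite_set set_sorted_list_of_set strict_sorted_equal strict_sorted_list_of_set)

lemma set_imface [simp]: "set (imface \<theta>) = set \<theta>"
  by (simp add: imface_def)

lemma set_ocomp: "set (ocomp a m) = nth a ` set m"
  by (simp add: ocomp_def)

lemma imface_ocomp_imface:
  "\<forall>j\<in>set m. j < length \<theta> \<Longrightarrow> imface (ocomp a (imface (ocomp \<theta> m))) = imface (ocomp (ocomp a \<theta>) m)"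
  by (simp add: imface_def ocomp_def image_image)

lemma face_imface_ocomp: "\<theta> \<in> ops p' p \<Longrightarrow> face p' m \<Longrightarrow> face p (imface (ocomp \<theta> m))"
  unfolding face_def ops_def imface_def ocomp_def by auto

lemma ops_length: "\<theta> \<in> ops p' p \<Longrightarrow> length \<theta> = Suc p'"
  unfolding ops_def by simp

lemma ops_bound: "\<theta> \<in> ops p' p \<Longrightarrow> i \<in> set \<theta> \<Longrightarrow> i < Suc p"
  unfolding ops_def by auto

lemma replicate_ops: "b \<le> p \<Longrightarrow> replicate (Suc q) b \<in> ops q p"
  unfolding ops_def by simp

lemma ocomp_ops:
  assumes "\<psi> \<in> ops q r" "\<phi> \<in> ops q' q"
  shows "ocomp \<psi> \<phi> \<in> ops q' r"
proof -
  have \<phi>_bound: "\<phi> ! i < length \<psi>" if "i < length \<phi>" for i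
    using ops_bound[OF assms(2), of "\<phi> ! i"] ops_length[OF assms(1)] that by simp
  have "sorted (ocomp \<psi> \<phi>)" unfolding sorted_iff_nth_mono
  proof (intro allI impI)
    fix i j assume ij: "i \<le> j" "j < length (ocomp \<psi> \<phi>)"
    then have "\<phi> ! i \<le> \<phi> ! j"
      using assms(2) unfolding ops_def ocomp_def by (simp add: sorted_iff_nth_mono)
    then show "ocomp \<psi> \<phi> ! i \<le> ocomp \<psi> \<phi> ! j"
      using assms(1) ij \<phi>_bound unfolding ops_def ocomp_def by (simp add: sorted_iff_nth_mono)
  qed
  moreover have "\<forall>i\<in>set (ocomp \<psi> \<phi>). i \<le> r"
    using assms ops_bound unfolding set_ocomp ops_def by (force simp: less_Suc_eq_le)
  ultimately show ?thesis using assms unfolding ops_def ocomp_def by simp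
qed

lemma ocomp_replicate:
  assumes "\<theta> \<in> ops q' q"
  shows "ocomp (replicate (Suc q) b) \<theta> = replicate (Suc q') b"
proof -
  have "ocomp (replicate (Suc q) b) \<theta> = map (\<lambda>_. b) \<theta>"
    unfolding ocomp_def using ops_bound[OF assms] by (intro map_cong) (simp_all del: replicate_Suc)
  then show ?thesis using ops_length[OF assms] by (simp add: map_replicate_const del: replicate_Suc)
qed

lemma chains_length: "\<mu> \<in> chains p q \<Longrightarrow> length \<mu> = Suc q"
  unfolding chains_def by simp

lemma chains_mono:
  assumes "\<mu> \<in> chains p q" "i \<le> j" "j < length \<mu>"
  shows "set (\<mu> ! i) \<subseteq> set (\<mu> ! j)"
  using assms(2,3)
proof (induction j)
  case (Suc j)
  moreover have "set (\<mu> ! j) \<subseteq> set (\<mu> ! Suc j)"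
    using assms(1) Suc.prems unfolding chains_def by blast
  ultimately show ?case by (cases "i = Suc j") auto
qed simp

lemma chains_bound:
  assumes "\<mu> \<in> chains p q" "m \<in> set \<mu>" "j \<in> set m"
  shows "j < Suc p"
proof -
  have "face p m" using assms(1,2) unfolding chains_def by (auto simp: in_set_conv_nth)
  then show ?thesis using assms(3) unfolding face_def by auto
qed

lemma bsd_push_chains: "\<theta> \<in> ops p' p \<Longrightarrow> \<mu> \<in> chains p' q \<Longrightarrow> bsd_push \<theta> \<mu> \<in> chains p q"
  using face_imface_ocomp unfolding chains_def bsd_push_def
  by (auto simp: ocomp_def) (metis image_iff subset_iff)

lemma chains_act:
  assumes "\<phi> \<in> ops q' q" "\<mu> \<in> chains p q"
  shows "map (nth \<mu>) \<phi> \<in> chains p q'"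
proof -
  have \<phi>_bound: "\<phi> ! i < length \<mu>" if "i < length \<phi>" for i
    using ops_bound[OF assms(1)] chains_length[OF assms(2)] that by simp
  moreover have "set (\<mu> ! (\<phi> ! i)) \<subseteq> set (\<mu> ! (\<phi> ! Suc i))" if "Suc i < length \<phi>" for i
    using chains_mono[OF assms(2)] \<phi>_bound that assms(1)
    unfolding ops_def by (simp add: sorted_iff_nth_mono)
  ultimately show ?thesis using assms unfolding chains_def ops_def by auto
qed

lemma bsd_push_act:
  "\<forall>i\<in>set \<phi>. i < length \<mu> \<Longrightarrow> map (nth (bsd_push \<theta> \<mu>)) \<phi> = bsd_push \<theta> (map (nth \<mu>) \<phi>)"
  by (simp add: bsd_push_def)

section \<open>Shrinking a chain onto a face\<close>

definition restrict_face :: "nat list \<Rightarrow> nat list \<Rightarrow> nat list \<Rightarrow> nat list" where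
  "restrict_face \<alpha> a m = filter (\<lambda>j. a ! j \<in> set \<alpha>) m"

definition covers :: "nat list \<Rightarrow> nat list \<Rightarrow> nat list list \<Rightarrow> bool" where
  "covers \<alpha> a \<mu> \<longleftrightarrow> (\<forall>m\<in>set \<mu>. set \<alpha> \<subseteq> nth a ` set m)"

definition shrink_chain :: "nat list \<Rightarrow> nat list \<Rightarrow> nat list \<Rightarrow> nat list list \<Rightarrow> nat list list" where
  "shrink_chain \<alpha> a \<psi> \<mu> = map (\<lambda>(b, m). if b = 0 then restrict_face \<alpha> a m else m) (zip \<psi> \<mu>)"

lemma length_shrink_chain [simp]: "length (shrink_chain \<alpha> a \<psi> \<mu>) = min (length \<psi>) (length \<mu>)"
  by (simp add: shrink_chain_def)

lemma nth_shrink_chain: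
  "i < length \<psi> \<Longrightarrow> i < length \<mu> \<Longrightarrow>
   shrink_chain \<alpha> a \<psi> \<mu> ! i = (if \<psi> ! i = 0 then restrict_face \<alpha> a (\<mu> ! i) else \<mu> ! i)"
  by (simp add: shrink_chain_def)

lemma image_restrict_face:
  "set \<alpha> \<subseteq> nth a ` set m \<Longrightarrow> nth a ` set (restrict_face \<alpha> a m) = set \<alpha>"
  unfolding restrict_face_def by auto

lemma face_restrict_face:
  assumes "face p m" "set \<alpha> \<subseteq> nth a ` set m" "\<alpha> \<noteq> []"
  shows "face p (restrict_face \<alpha> a m)"
proof -
  have "restrict_face \<alpha> a m \<noteq> []"
    using image_restrict_face[OF assms(2)] assms(3) by auto
  then show ?thesis using assms(1) unfolding face_def restrict_face_def by (auto simp: sorted_wrt_filter)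
qed

lemma restrict_face_bsd_push:
  assumes "\<forall>j\<in>set m. j < length \<theta>"
  shows "imface (ocomp \<theta> (restrict_face \<alpha> (ocomp a \<theta>) m)) = restrict_face \<alpha> a (imface (ocomp \<theta> m))"
proof (rule imface_eq_face)
  show "sorted_wrt (<) (restrict_face \<alpha> a (imface (ocomp \<theta> m)))"
    unfolding restrict_face_def imface_def by (simp add: sorted_wrt_filter)
  show "set (ocomp \<theta> (restrict_face \<alpha> (ocomp a \<theta>) m)) = set (restrict_face \<alpha> a (imface (ocomp \<theta> m)))"
    using assms unfolding restrict_face_def ocomp_def by auto
qed

lemma shrink_chain_chains:
  assumes "\<psi> \<in> ops q 1" "\<mu> \<in> chains p q" "covers \<alpha> a \<mu>" "\<alpha> \<noteq> []"
  shows "shrink_chain \<alpha> a \<psi> \<mu> \<in> chains p q"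
proof -
  have \<mu>: "length \<mu> = Suc q" "\<forall>i<Suc q. face p (\<mu> ! i)"
    "\<forall>i. Suc i < Suc q \<longrightarrow> set (\<mu> ! i) \<subseteq> set (\<mu> ! Suc i)"
    using assms(2) unfolding chains_def by auto
  have \<psi>: "length \<psi> = Suc q" "sorted \<psi>" "\<forall>i\<in>set \<psi>. i \<le> 1"
    using assms(1) unfolding ops_def by auto
  have "face p (shrink_chain \<alpha> a \<psi> \<mu> ! i)" if "i < Suc q" for i
    using face_restrict_face[of p "\<mu> ! i"] assms(3,4) \<mu> \<psi> that
    by (auto simp: nth_shrink_chain covers_def)
  moreover have "set (shrink_chain \<alpha> a \<psi> \<mu> ! i) \<subseteq> set (shrink_chain \<alpha> a \<psi> \<mu> ! Suc i)"
    if "Suc i < Suc q" for i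
  proof -
    have "\<psi> ! i \<le> \<psi> ! Suc i" "\<psi> ! Suc i \<le> 1" using \<psi> that by (simp_all add: sorted_iff_nth_mono)
    then show ?thesis using \<mu> \<psi> that
      by (cases "\<psi> ! i = 0"; cases "\<psi> ! Suc i = 0") (auto simp: nth_shrink_chain restrict_face_def)
  qed
  ultimately show ?thesis using \<mu> \<psi> unfolding chains_def by simp
qed

lemma covers_shrink_chain:
  "length \<psi> = length \<mu> \<Longrightarrow> covers \<alpha> a \<mu> \<Longrightarrow> covers \<alpha> a (shrink_chain \<alpha> a \<psi> \<mu>)"
  unfolding covers_def
  by (metis (no_types, lifting) image_restrict_face in_set_conv_nth length_shrink_chain min.idem
      nth_shrink_chain order.refl)

lemma covers_act:
  "\<forall>i\<in>set \<phi>. i < length \<mu> \<Longrightarrow> covers \<alpha> a \<mu> \<Longrightarrow> covers \<alpha> a (map (nth \<mu>) \<phi>)"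
  unfolding covers_def by auto

lemma bsd_push_shrink_chain_zero:
  assumes "covers \<alpha> a \<mu>" "sorted_wrt (<) \<alpha>"
  shows "bsd_push a (shrink_chain \<alpha> a (replicate (length \<mu>) 0) \<mu>) = replicate (length \<mu>) \<alpha>"
proof (rule nth_equalityI)
  fix i assume "i < length (bsd_push a (shrink_chain \<alpha> a (replicate (length \<mu>) 0) \<mu>))"
  then have i: "i < length \<mu>" by (simp add: bsd_push_def)
  then have "imface (ocomp a (restrict_face \<alpha> a (\<mu> ! i))) = \<alpha>"
    using assms image_restrict_face by (intro imface_eq_face) (auto simp: covers_def set_ocomp)
  then show "bsd_push a (shrink_chain \<alpha> a (replicate (length \<mu>) 0) \<mu>) ! i = replicate (length \<mu>) \<alpha> ! i"
    using i by (simp add: bsd_push_def nth_shrink_chain)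
qed (simp add: bsd_push_def)

lemma shrink_chain_one: "shrink_chain \<alpha> a (replicate (length \<mu>) 1) \<mu> = \<mu>"
  by (rule nth_equalityI) (auto simp: nth_shrink_chain)

lemma shrink_chain_fixes_fiber:
  assumes "bsd_push a \<mu> = replicate (length \<mu>) \<alpha>" "length \<psi> = length \<mu>"
  shows "shrink_chain \<alpha> a \<psi> \<mu> = \<mu>"
proof (rule nth_equalityI)
  fix i assume "i < length (shrink_chain \<alpha> a \<psi> \<mu>)"
  then have i: "i < length \<mu>" using assms(2) by simp
  then have "set (ocomp a (\<mu> ! i)) = set \<alpha>"
    using arg_cong[OF assms(1), of "\<lambda>l. set (l ! i)"] by (simp add: bsd_push_def)
  then have "restrict_face \<alpha> a (\<mu> ! i) = \<mu> ! i"
    unfolding restrict_face_def ocomp_def by (auto simp: filter_id_conv)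
  then show "shrink_chain \<alpha> a \<psi> \<mu> ! i = \<mu> ! i" using i assms(2) by (simp add: nth_shrink_chain)
qed (use assms in simp)

lemma shrink_chain_bsd_push:
  assumes "length \<psi> = length \<mu>" "\<forall>m\<in>set \<mu>. \<forall>j\<in>set m. j < length \<theta>"
  shows "shrink_chain \<alpha> a \<psi> (bsd_push \<theta> \<mu>) = bsd_push \<theta> (shrink_chain \<alpha> (ocomp a \<theta>) \<psi> \<mu>)"
proof (rule nth_equalityI)
  fix i assume "i < length (shrink_chain \<alpha> a \<psi> (bsd_push \<theta> \<mu>))"
  then have i: "i < length \<mu>" "i < length \<psi>" using assms(1) by (auto simp: bsd_push_def)
  then have "\<forall>j\<in>set (\<mu> ! i). j < length \<theta>" using assms(2) nth_mem by blast
  then show "shrink_chain \<alpha> a \<psi> (bsd_push \<theta> \<mu>) ! i = bsd_push \<theta> (shrink_chain \<alpha> (ocomp a \<theta>) \<psi> \<mu>) ! i"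
    using i restrict_face_bsd_push by (simp add: bsd_push_def nth_shrink_chain)
qed (use assms in \<open>simp add: bsd_push_def\<close>)

lemma shrink_chain_act:
  assumes "\<forall>i\<in>set \<phi>. i < length \<mu>" "length \<psi> = length \<mu>"
  shows "map (nth (shrink_chain \<alpha> a \<psi> \<mu>)) \<phi> = shrink_chain \<alpha> a (ocomp \<psi> \<phi>) (map (nth \<mu>) \<phi>)"
  by (rule nth_equalityI) (use assms in \<open>auto simp: nth_shrink_chain ocomp_def\<close>)

lemma equivclp_fun_eq:
  assumes "equivclp R a b" "\<And>u v. R u v \<Longrightarrow> G u = G v"
  shows "G a = G b"
  using assms(1) by induction (use assms(2) in auto)

lemma equivclp_map:
  assumes "equivclp R a b" "P a" "\<And>u v. R u v \<Longrightarrow> P u = P v"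
    and "\<And>u v. R u v \<Longrightarrow> P u \<Longrightarrow> S (F u) (F v)"
  shows "equivclp S (F a) (F b)"
proof -
  have "P b \<and> equivclp S (F a) (F b)"
    using assms(1)
  proof induction
    case (step y z)
    then have "P z" using assms(3) by metis
    moreover have "equivclp S (F y) (F z)"
      using step assms(4) \<open>P z\<close> by (auto intro: equivclp_sym)
    ultimately show ?case using step equivclp_trans by metis
  qed (use assms(2) in simp)
  then show ?thesis by simp
qed

lemma smap_comp: "smap X Y f \<Longrightarrow> smap Y Z g \<Longrightarrow> smap X Z (g \<circ> f)"
  unfolding smap_def by simp

lemma smap_id: "smap X X id"
  unfolding smap_def by simp

lemma cells_subsset: "cells (subsset X P) q = {x \<in> cells X q. P q x}"
  by (simp add: subsset_def)

lemma act_subsset [simp]: "act (subsset X P) = act X"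
  by (simp add: subsset_def)

lemma elem_htpyI:
  assumes "smap X Y f" "smap X Y g"
    and cells: "\<And>q c \<psi>. c \<in> cells X q \<Longrightarrow> \<psi> \<in> ops q 1 \<Longrightarrow> H c \<psi> \<in> cells Y q"
    and act: "\<And>q q' c \<psi> \<theta>. c \<in> cells X q \<Longrightarrow> \<psi> \<in> ops q 1 \<Longrightarrow> \<theta> \<in> ops q' q \<Longrightarrow>
                H (act X q \<theta> c) (ocomp \<psi> \<theta>) = act Y q \<theta> (H c \<psi>)"
    and "\<And>q c. c \<in> cells X q \<Longrightarrow> H c (replicate (Suc q) 0) = f c"
    and "\<And>q c. c \<in> cells X q \<Longrightarrow> H c (replicate (Suc q) 1) = g c"
  shows "elem_htpy X Y f g"
proof -
  have "smap (sprod X (stdsimplex 1)) Y (\<lambda>(c, \<psi>). H c \<psi>)"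
    unfolding smap_def sprod_def stdsimplex_def
    by (simp add: cells act split: prod.splits)
  then show ?thesis using assms(1,2,5,6) unfolding elem_htpy_def by auto
qed

lemma homotopy_equivalence_deformation_retract:
  assumes i: "smap X Y i" and r: "smap Y X r"
    and r_i: "\<And>q x. x \<in> cells X q \<Longrightarrow> r (i x) = x"
    and htpy: "elem_htpy Y Y (i \<circ> r) id"
  shows "homotopy_equivalence X Y i"
proof -
  have "elem_htpy X X (r \<circ> i) id"
    by (rule elem_htpyI[where H = "\<lambda>x \<psi>. x"]) (simp_all add: smap_comp[OF i r] smap_id r_i)
  then have "homotopic X X (r \<circ> i) id"
    unfolding homotopic_def by (simp add: smap_comp[OF i r] smap_id r_into_equivclp)
  moreover have "homotopic Y Y (i \<circ> r) id"
    using htpy unfolding homotopic_def by (simp add: smap_comp[OF r i] smap_id r_into_equivclp)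
  ultimately show ?thesis using i r unfolding homotopy_equivalence_def by blast
qed

type_synonym 'a triple = "nat \<times> 'a \<times> nat list list"

definition triple_valid :: "'a sset \<Rightarrow> nat \<Rightarrow> 'a triple \<Rightarrow> bool" where
  "triple_valid E q t \<longleftrightarrow> (case t of (p, x, \<mu>) \<Rightarrow> x \<in> cells E p \<and> \<mu> \<in> chains p q)"

definition pick :: "'b set \<Rightarrow> 'b" where
  "pick c = (SOME t. t \<in> c)"

definition triple_image :: "('a \<Rightarrow> nat list) \<Rightarrow> 'a triple \<Rightarrow> nat list list" where
  "triple_image f t = (case t of (p, x, \<mu>) \<Rightarrow> bsd_push (f x) \<mu>)"

definition triple_act :: "nat list \<Rightarrow> 'a triple \<Rightarrow> 'a triple" where
  "triple_act \<phi> t = (case t of (p, x, \<mu>) \<Rightarrow> (p, x, map (nth \<mu>) \<phi>))"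

lemma Sdf_eq_triple_image: "Sdf f c = triple_image f (pick c)"
  unfolding Sdf_def triple_image_def pick_def bsd_push_def by simp

lemma act_Sd: "act (Sd E) q \<phi> c = sd_class E (length \<phi> - 1) (triple_act \<phi> (pick c))"
  unfolding Sd_def triple_act_def pick_def by (simp split: prod.split)

lemma triple_valid_length: "triple_valid E q (p, x, \<mu>) \<Longrightarrow> length \<mu> = Suc q"
  unfolding triple_valid_def by (auto simp: chains_length)

lemma sd_genI:
  "x \<in> cells E p \<Longrightarrow> \<theta> \<in> ops p' p \<Longrightarrow> \<mu> \<in> chains p' q \<Longrightarrow>
   sd_gen E q (p', act E p \<theta> x, \<mu>) (p, x, bsd_push \<theta> \<mu>)"
  unfolding sd_gen_def by blast

lemma sd_genE:
  assumes "sd_gen E q u v"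
  obtains p p' x \<theta> \<mu> where "x \<in> cells E p" "\<theta> \<in> ops p' p" "\<mu> \<in> chains p' q"
    "u = (p', act E p \<theta> x, \<mu>)" "v = (p, x, bsd_push \<theta> \<mu>)"
  using assms unfolding sd_gen_def by blast

lemma mem_sd_class: "t \<in> sd_class E q t"
  unfolding sd_class_def by simp

lemma sd_class_eqI:
  assumes "equivclp (sd_gen E q) t t'"
  shows "sd_class E q t = sd_class E q t'"
proof -
  have "equivclp (sd_gen E q) t s \<longleftrightarrow> equivclp (sd_gen E q) t' s" for s
    using equivclp_trans[OF assms] equivclp_trans[OF equivclp_sym[OF assms]] by blast
  then have "equivclp (sd_gen E q) t = equivclp (sd_gen E q) t'" by (rule ext)
  then show ?thesis unfolding sd_class_def by simp
qed

lemma sd_gen_triple_act: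
  assumes "sd_gen E q u v" "\<phi> \<in> ops q' q"
  shows "sd_gen E q' (triple_act \<phi> u) (triple_act \<phi> v)"
proof -
  obtain p p' x \<theta> \<mu> where h: "x \<in> cells E p" "\<theta> \<in> ops p' p" "\<mu> \<in> chains p' q"
    "u = (p', act E p \<theta> x, \<mu>)" "v = (p, x, bsd_push \<theta> \<mu>)"
    using assms(1) by (rule sd_genE)
  have "\<forall>i\<in>set \<phi>. i < length \<mu>" using ops_bound[OF assms(2)] chains_length[OF h(3)] by simp
  then have "map (nth (bsd_push \<theta> \<mu>)) \<phi> = bsd_push \<theta> (map (nth \<mu>) \<phi>)" by (rule bsd_push_act)
  then show ?thesis
    unfolding triple_act_def h(4,5) using sd_genI[OF h(1,2) chains_act[OF assms(2) h(3)]] by simp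
qed

lemma triple_valid_act:
  "triple_valid E q t \<Longrightarrow> \<phi> \<in> ops q' q \<Longrightarrow> triple_valid E q' (triple_act \<phi> t)"
  unfolding triple_valid_def triple_act_def by (cases t) (simp add: chains_act)

lemma cells_ESt: "cells (ESt E f n \<alpha>) q = {c \<in> cells (Sd E) q. Sdf f c \<in> star n \<alpha> q}"
  by (simp add: ESt_def cells_subsset)

lemma cells_Sd_fiber: "cells (Sd_fiber E f \<alpha>) q = {c \<in> cells (Sd E) q. Sdf f c = replicate (Suc q) \<alpha>}"
  by (simp add: Sd_fiber_def cells_subsset)

lemma act_ESt [simp]: "act (ESt E f n \<alpha>) = act (Sd E)"
  by (simp add: ESt_def)

lemma act_Sd_fiber [simp]: "act (Sd_fiber E f \<alpha>) = act (Sd E)"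
  by (simp add: Sd_fiber_def)

locale subdivision =
  fixes E :: "'a sset"
  assumes sset: "sset E"
begin

lemma act_cells: "x \<in> cells E p \<Longrightarrow> \<theta> \<in> ops p' p \<Longrightarrow> act E p \<theta> x \<in> cells E p'"
  using sset unfolding sset_def by blast

lemma sd_gen_valid:
  assumes "sd_gen E q u v"
  shows "triple_valid E q u" "triple_valid E q v"
  using assms by (auto elim!: sd_genE simp: triple_valid_def act_cells bsd_push_chains)

lemma pick_sd_class:
  assumes "triple_valid E q t"
  shows "equivclp (sd_gen E q) t (pick (sd_class E q t))" "triple_valid E q (pick (sd_class E q t))"
proof -
  have "pick (sd_class E q t) \<in> sd_class E q t" unfolding pick_def by (rule someI, rule mem_sd_class)
  then show t: "equivclp (sd_gen E q) t (pick (sd_class E q t))" unfolding sd_class_def by simp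
  show "triple_valid E q (pick (sd_class E q t))"
    using equivclp_fun_eq[OF t, of "triple_valid E q"] sd_gen_valid assms by blast
qed

lemma Sd_cellsD:
  assumes "c \<in> cells (Sd E) q"
  shows "triple_valid E q (pick c)" "c = sd_class E q (pick c)"
proof -
  obtain t where t: "c = sd_class E q t" "triple_valid E q t"
    using assms unfolding Sd_def triple_valid_def by auto
  show "triple_valid E q (pick c)" using pick_sd_class(2)[OF t(2)] t(1) by simp
  show "c = sd_class E q (pick c)" using sd_class_eqI[OF pick_sd_class(1)[OF t(2)]] t(1) by simp
qed

lemma Sd_cellsI: "triple_valid E q t \<Longrightarrow> sd_class E q t \<in> cells (Sd E) q"
  unfolding Sd_def triple_valid_def by (auto split: prod.splits)

lemma act_Sd_sd_class:
  assumes "triple_valid E q t" "\<phi> \<in> ops q' q"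
  shows "act (Sd E) q \<phi> (sd_class E q t) = sd_class E q' (triple_act \<phi> t)"
proof -
  have "equivclp (sd_gen E q') (triple_act \<phi> t) (triple_act \<phi> (pick (sd_class E q t)))"
    by (rule equivclp_map[OF pick_sd_class(1)[OF assms(1)], of "\<lambda>_. True"])
      (simp_all add: sd_gen_triple_act[OF _ assms(2)])
  then have "sd_class E q' (triple_act \<phi> (pick (sd_class E q t))) = sd_class E q' (triple_act \<phi> t)"
    by (rule sd_class_eqI[OF equivclp_sym])
  then show ?thesis unfolding act_Sd using ops_length[OF assms(2)] by simp
qed

end

locale subdivision_over_simplex = subdivision +
  fixes f :: "'a \<Rightarrow> nat list" and n :: nat
  assumes smap: "smap E (stdsimplex n) f"
begin

lemma f_act: "x \<in> cells E p \<Longrightarrow> \<theta> \<in> ops p' p \<Longrightarrow> f (act E p \<theta> x) = ocomp (f x) \<theta>"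
  using smap unfolding smap_def stdsimplex_def by simp

lemma f_cells: "x \<in> cells E p \<Longrightarrow> f x \<in> ops p n"
  using smap unfolding smap_def stdsimplex_def by simp

lemma sd_gen_triple_image:
  assumes "sd_gen E q u v"
  shows "triple_image f u = triple_image f v"
proof -
  obtain p p' x \<theta> \<mu> where h: "x \<in> cells E p" "\<theta> \<in> ops p' p" "\<mu> \<in> chains p' q"
    "u = (p', act E p \<theta> x, \<mu>)" "v = (p, x, bsd_push \<theta> \<mu>)"
    using assms by (rule sd_genE)
  have "\<forall>j\<in>set m. j < length \<theta>" if "m \<in> set \<mu>" for m
    using chains_bound[OF h(3) that] ops_length[OF h(2)] by simp
  then show ?thesis
    unfolding triple_image_def bsd_push_def h(4,5) by (simp add: f_act[OF h(1,2)] imface_ocomp_imface)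
qed

lemma Sdf_sd_class:
  assumes "triple_valid E q t"
  shows "Sdf f (sd_class E q t) = triple_image f t"
proof -
  have "triple_image f t = triple_image f (pick (sd_class E q t))"
    by (rule equivclp_fun_eq[OF pick_sd_class(1)[OF assms] sd_gen_triple_image])
  then show ?thesis unfolding Sdf_eq_triple_image by simp
qed

lemma triple_image_chains:
  assumes "triple_valid E q (p, x, \<mu>)"
  shows "triple_image f (p, x, \<mu>) \<in> chains n q"
proof -
  have "x \<in> cells E p" "\<mu> \<in> chains p q" using assms unfolding triple_valid_def by simp_all
  then show ?thesis unfolding triple_image_def by (simp add: bsd_push_chains[OF f_cells])
qed

end

section \<open>Deforming the star onto the fiber\<close>

locale star_of_face = subdivision_over_simplex +
  fixes \<alpha> :: "nat list"
  assumes face: "face n \<alpha>"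
begin

definition triple_covers :: "'a triple \<Rightarrow> bool" where
  "triple_covers t \<longleftrightarrow> (case t of (p, x, \<mu>) \<Rightarrow> covers \<alpha> (f x) \<mu>)"

definition triple_shrink :: "nat list \<Rightarrow> 'a triple \<Rightarrow> 'a triple" where
  "triple_shrink \<psi> t = (case t of (p, x, \<mu>) \<Rightarrow> (p, x, shrink_chain \<alpha> (f x) \<psi> \<mu>))"

definition star_htpy :: "'a triple set \<Rightarrow> nat list \<Rightarrow> 'a triple set" where
  "star_htpy c \<psi> = sd_class E (length \<psi> - 1) (triple_shrink \<psi> (pick c))"

text \<open>A simplex c of ESt(alpha) has dimension length (Sdf f c) - 1; this lets the retraction pick
  the constant operator [q] -> [1] with value 0 without knowing q.\<close>
definition star_retraction :: "'a triple set \<Rightarrow> 'a triple set" where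
  "star_retraction c = star_htpy c (replicate (length (Sdf f c)) 0)"

lemma triple_covers_iff: "triple_covers t \<longleftrightarrow> (\<forall>m\<in>set (triple_image f t). set \<alpha> \<subseteq> set m)"
  unfolding triple_covers_def triple_image_def bsd_push_def covers_def
  by (cases t) (simp add: set_ocomp)

lemma sd_gen_triple_covers: "sd_gen E q u v \<Longrightarrow> triple_covers u \<longleftrightarrow> triple_covers v"
  unfolding triple_covers_iff by (simp add: sd_gen_triple_image)

lemma triple_image_in_star:
  assumes "triple_valid E q t"
  shows "triple_image f t \<in> star n \<alpha> q \<longleftrightarrow> triple_covers t"
  using assms unfolding star_def triple_covers_iff
  by (cases t) (simp add: triple_image_chains all_set_conv_all_nth)

lemma sd_class_in_ESt:
  "triple_valid E q t \<Longrightarrow> triple_covers t \<Longrightarrow> sd_class E q t \<in> cells (ESt E f n \<alpha>) q"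
  unfolding cells_ESt by (simp add: Sd_cellsI Sdf_sd_class triple_image_in_star)

lemma ESt_cellsD:
  assumes "c \<in> cells (ESt E f n \<alpha>) q"
  shows "triple_valid E q (pick c)" "triple_covers (pick c)" "c = sd_class E q (pick c)"
proof -
  have c: "c \<in> cells (Sd E) q" "Sdf f c \<in> star n \<alpha> q" using assms unfolding cells_ESt by auto
  show "triple_valid E q (pick c)" "c = sd_class E q (pick c)" using Sd_cellsD[OF c(1)] by simp_all
  then show "triple_covers (pick c)"
    using c(2) triple_image_in_star unfolding Sdf_eq_triple_image by simp
qed

lemma fiber_subset_ESt: "c \<in> cells (Sd_fiber E f \<alpha>) q \<Longrightarrow> c \<in> cells (ESt E f n \<alpha>) q"
  using face unfolding cells_ESt cells_Sd_fiber star_def chains_def by (simp del: replicate_Suc)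

lemma ESt_length_Sdf: "c \<in> cells (ESt E f n \<alpha>) q \<Longrightarrow> length (Sdf f c) = Suc q"
  unfolding cells_ESt star_def by (auto dest: chains_length)

lemma triple_shrink_valid:
  assumes "triple_valid E q t" "triple_covers t" "\<psi> \<in> ops q 1"
  shows "triple_valid E q (triple_shrink \<psi> t)" "triple_covers (triple_shrink \<psi> t)"
proof -
  obtain p x \<mu> where t: "t = (p, x, \<mu>)" by (cases t)
  have \<mu>: "\<mu> \<in> chains p q" "covers \<alpha> (f x) \<mu>"
    using assms(1,2) unfolding t triple_valid_def triple_covers_def by simp_all
  have "\<alpha> \<noteq> []" using face unfolding face_def by simp
  then show "triple_valid E q (triple_shrink \<psi> t)"
    using assms(1) shrink_chain_chains[OF assms(3) \<mu>]
    unfolding t triple_valid_def triple_shrink_def by simp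
  show "triple_covers (triple_shrink \<psi> t)"
    using covers_shrink_chain[OF _ \<mu>(2)] ops_length[OF assms(3)] chains_length[OF \<mu>(1)]
    unfolding t triple_covers_def triple_shrink_def by simp
qed

lemma triple_covers_act:
  assumes "triple_valid E q t" "triple_covers t" "\<phi> \<in> ops q' q"
  shows "triple_covers (triple_act \<phi> t)"
proof -
  obtain p x \<mu> where t: "t = (p, x, \<mu>)" by (cases t)
  have "length \<mu> = Suc q" using assms(1) unfolding t by (rule triple_valid_length)
  then have "\<forall>i\<in>set \<phi>. i < length \<mu>" using ops_bound[OF assms(3)] by simp
  then show ?thesis
    using assms(2) covers_act unfolding t triple_covers_def triple_act_def by simp
qed

lemma sd_gen_triple_shrink:
  assumes "sd_gen E q u v" "triple_covers u" "\<psi> \<in> ops q 1"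
  shows "sd_gen E q (triple_shrink \<psi> u) (triple_shrink \<psi> v)"
proof -
  obtain p p' x \<theta> \<mu> where h: "x \<in> cells E p" "\<theta> \<in> ops p' p" "\<mu> \<in> chains p' q"
    "u = (p', act E p \<theta> x, \<mu>)" "v = (p, x, bsd_push \<theta> \<mu>)"
    using assms(1) by (rule sd_genE)
  let ?\<mu>' = "shrink_chain \<alpha> (ocomp (f x) \<theta>) \<psi> \<mu>"
  have "triple_valid E q (triple_shrink \<psi> u)"
    using triple_shrink_valid(1)[OF sd_gen_valid(1)[OF assms(1)] assms(2,3)] .
  then have "?\<mu>' \<in> chains p' q"
    unfolding h(4) triple_shrink_def triple_valid_def by (simp add: f_act[OF h(1,2)])
  then have "sd_gen E q (p', act E p \<theta> x, ?\<mu>') (p, x, bsd_push \<theta> ?\<mu>')"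
    by (rule sd_genI[OF h(1,2)])
  moreover have "shrink_chain \<alpha> (f x) \<psi> (bsd_push \<theta> \<mu>) = bsd_push \<theta> ?\<mu>'"
    using ops_length[OF assms(3)] chains_length[OF h(3)] chains_bound[OF h(3)] ops_length[OF h(2)]
    by (intro shrink_chain_bsd_push) simp_all
  ultimately show ?thesis unfolding triple_shrink_def h(4,5) by (simp add: f_act[OF h(1,2)])
qed

lemma triple_act_shrink:
  assumes "triple_valid E q t" "\<psi> \<in> ops q 1" "\<phi> \<in> ops q' q"
  shows "triple_act \<phi> (triple_shrink \<psi> t) = triple_shrink (ocomp \<psi> \<phi>) (triple_act \<phi> t)"
proof -
  obtain p x \<mu> where t: "t = (p, x, \<mu>)" by (cases t)
  have "length \<mu> = Suc q" using assms(1) unfolding t by (rule triple_valid_length)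
  then show ?thesis
    unfolding t triple_act_def triple_shrink_def
    using shrink_chain_act ops_bound[OF assms(3)] ops_length[OF assms(2)] by simp
qed

lemma star_htpy_sd_class:
  assumes "triple_valid E q t" "triple_covers t" "\<psi> \<in> ops q 1"
  shows "star_htpy (sd_class E q t) \<psi> = sd_class E q (triple_shrink \<psi> t)"
proof -
  have "equivclp (sd_gen E q) (triple_shrink \<psi> t) (triple_shrink \<psi> (pick (sd_class E q t)))"
    by (rule equivclp_map[OF pick_sd_class(1)[OF assms(1)], of triple_covers])
      (use assms sd_gen_triple_covers sd_gen_triple_shrink in auto)
  then show ?thesis
    unfolding star_htpy_def using ops_length[OF assms(3)] by (simp add: sd_class_eqI[OF equivclp_sym])
qed

lemma star_htpy_cells:
  assumes "c \<in> cells (ESt E f n \<alpha>) q" "\<psi> \<in> ops q 1"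
  shows "star_htpy c \<psi> \<in> cells (ESt E f n \<alpha>) q"
proof -
  have t: "triple_valid E q (pick c)" "triple_covers (pick c)" "c = sd_class E q (pick c)"
    using ESt_cellsD[OF assms(1)] by simp_all
  have "star_htpy c \<psi> = sd_class E q (triple_shrink \<psi> (pick c))"
    by (subst t(3)) (rule star_htpy_sd_class[OF t(1,2) assms(2)])
  then show ?thesis using sd_class_in_ESt triple_shrink_valid[OF t(1,2) assms(2)] by simp
qed

lemma ESt_act_cells:
  assumes "c \<in> cells (ESt E f n \<alpha>) q" "\<phi> \<in> ops q' q"
  shows "act (Sd E) q \<phi> c \<in> cells (ESt E f n \<alpha>) q'"
proof -
  have t: "triple_valid E q (pick c)" "triple_covers (pick c)" "c = sd_class E q (pick c)"
    using ESt_cellsD[OF assms(1)] by simp_all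
  have "act (Sd E) q \<phi> c = sd_class E q' (triple_act \<phi> (pick c))"
    by (subst t(3)) (rule act_Sd_sd_class[OF t(1) assms(2)])
  then show ?thesis
    using sd_class_in_ESt triple_valid_act[OF t(1) assms(2)] triple_covers_act[OF t(1,2) assms(2)]
    by simp
qed

lemma star_htpy_act:
  assumes "c \<in> cells (ESt E f n \<alpha>) q" "\<psi> \<in> ops q 1" "\<phi> \<in> ops q' q"
  shows "star_htpy (act (Sd E) q \<phi> c) (ocomp \<psi> \<phi>) = act (Sd E) q \<phi> (star_htpy c \<psi>)"
proof -
  define t where "t = pick c"
  have t: "triple_valid E q t" "triple_covers t" "c = sd_class E q t"
    using ESt_cellsD[OF assms(1)] unfolding t_def by simp_all
  have t': "triple_valid E q' (triple_act \<phi> t)" "triple_covers (triple_act \<phi> t)"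
    using triple_valid_act[OF t(1) assms(3)] triple_covers_act[OF t(1,2) assms(3)] .
  have "star_htpy (act (Sd E) q \<phi> c) (ocomp \<psi> \<phi>)
      = sd_class E q' (triple_shrink (ocomp \<psi> \<phi>) (triple_act \<phi> t))"
    unfolding t(3) act_Sd_sd_class[OF t(1) assms(3)]
    using star_htpy_sd_class[OF t' ocomp_ops[OF assms(2,3)]] .
  also have "\<dots> = act (Sd E) q \<phi> (sd_class E q (triple_shrink \<psi> t))"
    using act_Sd_sd_class[OF triple_shrink_valid(1)[OF t(1,2) assms(2)] assms(3)]
    by (simp add: triple_act_shrink[OF t(1) assms(2,3)])
  also have "\<dots> = act (Sd E) q \<phi> (star_htpy c \<psi>)"
    unfolding t(3) star_htpy_sd_class[OF t(1,2) assms(2)] ..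
  finally show ?thesis .
qed

lemma star_htpy_one:
  assumes "c \<in> cells (ESt E f n \<alpha>) q"
  shows "star_htpy c (replicate (Suc q) 1) = c"
proof -
  obtain p x \<mu> where t: "pick c = (p, x, \<mu>)" by (cases "pick c")
  have "length \<mu> = Suc q" using ESt_cellsD(1)[OF assms] unfolding t by (rule triple_valid_length)
  then have "triple_shrink (replicate (Suc q) 1) (pick c) = pick c"
    unfolding t triple_shrink_def using shrink_chain_one[of \<alpha> "f x" \<mu>] by simp
  then show ?thesis unfolding star_htpy_def using ESt_cellsD(3)[OF assms] by simp
qed

lemma star_retraction_eq:
  "c \<in> cells (ESt E f n \<alpha>) q \<Longrightarrow> star_retraction c = star_htpy c (replicate (Suc q) 0)"
  unfolding star_retraction_def by (simp add: ESt_length_Sdf del: replicate_Suc)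

lemma star_retraction_in_fiber:
  assumes "c \<in> cells (ESt E f n \<alpha>) q"
  shows "star_retraction c \<in> cells (Sd_fiber E f \<alpha>) q"
proof -
  obtain p x \<mu> where t: "pick c = (p, x, \<mu>)" by (cases "pick c")
  have t_ok: "triple_valid E q (pick c)" "triple_covers (pick c)" using ESt_cellsD[OF assms] by simp_all
  have "sorted_wrt (<) \<alpha>" using face unfolding face_def by simp
  then have "bsd_push (f x) (shrink_chain \<alpha> (f x) (replicate (length \<mu>) 0) \<mu>) = replicate (length \<mu>) \<alpha>"
    using t_ok(2) bsd_push_shrink_chain_zero unfolding t triple_covers_def by simp
  moreover have "length \<mu> = Suc q" using t_ok(1) unfolding t by (rule triple_valid_length)
  ultimately have "triple_image f (triple_shrink (replicate (Suc q) 0) (pick c)) = replicate (Suc q) \<alpha>"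
    unfolding t triple_shrink_def triple_image_def by (simp del: replicate_Suc)
  moreover have "triple_valid E q (triple_shrink (replicate (Suc q) 0) (pick c))"
    using triple_shrink_valid(1)[OF t_ok replicate_ops] by simp
  ultimately show ?thesis
    unfolding star_retraction_eq[OF assms] star_htpy_def cells_Sd_fiber
    by (simp add: Sd_cellsI Sdf_sd_class del: replicate_Suc)
qed

lemma star_retraction_fixes_fiber:
  assumes "c \<in> cells (Sd_fiber E f \<alpha>) q"
  shows "star_retraction c = c"
proof -
  have c: "c \<in> cells (ESt E f n \<alpha>) q" using fiber_subset_ESt[OF assms] .
  obtain p x \<mu> where t: "pick c = (p, x, \<mu>)" by (cases "pick c")
  have "length \<mu> = Suc q" using ESt_cellsD(1)[OF c] unfolding t by (rule triple_valid_length)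
  moreover have "bsd_push (f x) \<mu> = replicate (Suc q) \<alpha>"
    using assms t unfolding cells_Sd_fiber Sdf_eq_triple_image triple_image_def by (simp del: replicate_Suc)
  ultimately have "triple_shrink (replicate (Suc q) 0) (pick c) = pick c"
    unfolding t triple_shrink_def using shrink_chain_fixes_fiber by simp
  then show ?thesis
    unfolding star_retraction_eq[OF c] star_htpy_def using ESt_cellsD(3)[OF c] by simp
qed

lemma star_retraction_act:
  assumes "c \<in> cells (ESt E f n \<alpha>) q" "\<phi> \<in> ops q' q"
  shows "star_retraction (act (Sd E) q \<phi> c) = act (Sd E) q \<phi> (star_retraction c)"
  unfolding star_retraction_eq[OF assms(1)] star_retraction_eq[OF ESt_act_cells[OF assms]]
  using star_htpy_act[OF assms(1) replicate_ops assms(2)] ocomp_replicate[OF assms(2)]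
  by simp

theorem homotopy_equivalence_fiber_ESt: "homotopy_equivalence (Sd_fiber E f \<alpha>) (ESt E f n \<alpha>) id"
proof (rule homotopy_equivalence_deformation_retract)
  show incl: "smap (Sd_fiber E f \<alpha>) (ESt E f n \<alpha>) id"
    unfolding smap_def by (simp add: fiber_subset_ESt)
  show retr: "smap (ESt E f n \<alpha>) (Sd_fiber E f \<alpha>) star_retraction"
    unfolding smap_def by (simp add: star_retraction_in_fiber star_retraction_act)
  show "\<And>q c. c \<in> cells (Sd_fiber E f \<alpha>) q \<Longrightarrow> star_retraction (id c) = c"
    by (simp add: star_retraction_fixes_fiber)
  show "elem_htpy (ESt E f n \<alpha>) (ESt E f n \<alpha>) (id \<circ> star_retraction) id"
    by (rule elem_htpyI[where H = star_htpy])
      (use smap_comp[OF retr incl] smap_id star_htpy_cells star_htpy_act star_retraction_eq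
        star_htpy_one in \<open>simp_all del: replicate_Suc\<close>)
qed

end

theorem lemma4p2:
  fixes E :: "'a sset" and f :: "'a \<Rightarrow> nat list" and n :: nat and \<alpha> :: "nat list"
  assumes "sset E"
    and "smap E (stdsimplex n) f"
    and "\<forall>q. f ` cells E q = cells (stdsimplex n) q"
    and "face n \<alpha>"
  shows "homotopy_equivalence (Sd_fiber E f \<alpha>) (ESt E f n \<alpha>) id"
proof -
  interpret star_of_face E f n \<alpha>
    using assms(1,2,4) by unfold_locales
  show ?thesis by (rule homotopy_equivalence_fiber_ESt)
qed

end
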